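(* Let $T$ be a rhombic alternative tableau of type $X\in B_n^r$ with tiling $\mathcal{T}$, and run the label-passing algorithm on $T$. Suppose that a label $J$ is passed along the line of a north-strip $\mathbf{n}$ southward out of a tile $\mathbf{t}$ of $\mathbf{n}$, and that no tile of $\mathbf{n}$ below $\mathbf{t}$ contains an $\alpha$. Then at the completion of the algorithm, the southeast boundary edge (external vertex) of $\mathbf{n}$ carries the label $\{J_{\max}\}$, where $J_{\max}=\max J$.
   Context: Words and diagrams. For $0\le r\le n$ let $B_n^r$ be the set of words $X\in\{H,L,0\}^n$ with exactly $r$ letters $L$. If $X$ has $k$ letters $H$, $r$ letters $L$ and $\ell$ letters $0$, its rhombic diagram $\Gamma(X)$ is the closed region bounded by two paths of unit steps, using the directions west (horizontal), south (vertical) and southwest (diagonal: a fixed unit vector strictly between west and south), both going from a point $P$ to a point $Q$: the northwest boundary consists of $\ell$ west steps, then $r$ southwest steps, then $k$ south steps; the southeast boundary is obtained by reading $X$ left to right and taking a west step for each $0$, a southwest step for each $L$, a south step for each $H$. A tiling of $\Gamma(X)$ is a tiling by unit rhombi of three kinds: squares (horizontal and vertical edges), tall rhombi (vertical and diagonal edges), short rhombi (horizontal and diagonal edges). A west-strip (resp. north-strip, northwest-strip) is a maximal set of tiles connected through shared vertical (resp. horizontal, diagonal) edges; each runs from an edge of the southeast boundary to an edge of the northwest boundary. Rhombic alternative tableaux. A rhombic alternative tableau (RAT) of type $X$ with tiling $\mathcal{T}$ is a filling of the tiles of $\mathcal{T}$, each tile empty or containing one of $\alpha,\beta,q$, where $\alpha$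 occurs only in squares and short rhombi and $\beta$ only in squares and tall rhombi, such that: (i) every tile in the same west-strip as a tile containing $\beta$ and to its left is empty; (ii) every tile in the same north-strip as a tile containing $\alpha$ and above it is empty; (iii) every tile not forced to be empty by (i),(ii) contains $\alpha$, $\beta$ or $q$. Label-passing algorithm. A label is a finite set of consecutive integers; for labels $C,D$ write $D\succ C$ if both are nonempty and $\min D=\max C+1$. Given a RAT $T$: through each west-strip draw a line through the midpoints of its vertical edges, through each north-strip a line through midpoints of its horizontal edges, and through each northwest-strip a line through midpoints of its diagonal edges (all passing through the tile centres). For every tile containing $\alpha$ erase the part of its north-strip line above the tile's centre; for every tile containing $\beta$ erase the part of its west-strip line to the left of the tile's centre. This yields a forest of binary trees whose branching vertices are the centres of tiles containing $\alpha$ or $\beta$, whose leaves (external vertices) are the southeast boundary edges and whose roots are northwest boundary edges; roots are red/green/blue according as they lie on a west-/northwest-/north-strip. Add a special trivial green root at $Q$ with one fictitious leaf. Order the roots: red roots from top to bottom, then green roots (starting with the special one) from southwest to northeast, then blue roots from left to right. Label the roots so that each root label has as many elements as its tree has leaves (one for the special root), each root's label is $\succ$ the label of the preceding root, and the union of all root labels is $\{1,\dots,n+1\}$. Labels are then passed from the roots towards the leaves (southeastward) along branches, unchanged along branches; when a label $B$ reaches a branching vertex $v$ it is split as $B=C\cup D$ with $D\succ C$, each of the two outgoing branches getting a label of size equal to its number of leaves, according to: (I) if $v$ lies in a rhombus (tall or short), $D$ goes to the outgoing branch along the northwest-strip; (II) if $v$ lies in a square containing $\alpha$, $D$ goes to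 the branch leaving eastward and $C$ to the branch leaving southward; (III) if $v$ lies in a square containing $\beta$, $D$ goes to the branch leaving southward and $C$ to the branch leaving eastward. At completion every southeast boundary edge carries a singleton label. *)

theory Defs
  imports Main
begin

text \<open>Letters H, L, 0 (the letter 0 is written Z).\<close>
datatype letter = H | L | Z

definition B :: "nat \<Rightarrow> nat \<Rightarrow> letter list set" where
  "B n r = {X. length X = n \<and> length (filter (\<lambda>c. c = L) X) = r}"

text \<open>Order of the step directions along the northwest boundary:
  west (0) first, then southwest (L), then south (H).\<close>
fun rk :: "letter \<Rightarrow> nat" where
  "rk Z = 0" | "rk L = 1" | "rk H = 2"

text \<open>Strips are identified with the positions 0..n-1 of the southeast boundary
  word X (strip s starts at the s-th southeast boundary edge; its letter is X!s:
  H = west-strip, L = northwest-strip, Z = north-strip).  A tiling is encoded by a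
  sequence of elementary moves sweeping the southeast boundary path to the
  northwest boundary path: the path at stage j is a list of strips, and move j
  replaces two consecutive edges (positions i, i+1, i = sw!j) read from P to Q by
  the same two edges in the other order, which adds the rhombus (tile) j spanned
  by them on the northwest side.  Tile j belongs to exactly the two strips that
  are swapped; along a strip, tiles with smaller index are further southeast.\<close>

definition swap_at :: "nat \<Rightarrow> 'a list \<Rightarrow> 'a list" where
  "swap_at i w = w[i := w ! Suc i, Suc i := w ! i]"

definition path :: "letter list \<Rightarrow> nat list \<Rightarrow> nat \<Rightarrow> nat list" where
  "path X sw j = fold swap_at (take j sw) [0..<length X]"

definition tp :: "letter list \<Rightarrow> nat list \<Rightarrow> nat \<Rightarrow> nat" where
  "tp X sw j = path X sw j ! (sw ! j)"

definition tq :: "letter list \<Rightarrow> nat list \<Rightarrow> nat \<Rightarrow> nat" where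
  "tq X sw j = path X sw j ! Suc (sw ! j)"

definition tile_strips :: "letter list \<Rightarrow> nat list \<Rightarrow> nat \<Rightarrow> nat set" where
  "tile_strips X sw j = {tp X sw j, tq X sw j}"

definition is_tiling :: "letter list \<Rightarrow> nat list \<Rightarrow> bool" where
  "is_tiling X sw \<longleftrightarrow>
     (\<forall>j<length sw. Suc (sw ! j) < length X \<and>
        rk (X ! tp X sw j) > rk (X ! tq X sw j)) \<and>
     sorted (map (\<lambda>s. rk (X ! s)) (path X sw (length sw)))"

datatype cell = Empty | Alpha | Beta | Qc

definition forced_empty :: "letter list \<Rightarrow> nat list \<Rightarrow> (nat \<Rightarrow> cell) \<Rightarrow> nat \<Rightarrow> bool" where
  "forced_empty X sw F j \<longleftrightarrow>
     (\<exists>j'<j. (F j' = Beta \<and> (\<exists>s. s \<in> tile_strips X sw j' \<and> s \<in> tile_strips X sw j \<and> X ! s = H))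
          \<or> (F j' = Alpha \<and> (\<exists>s. s \<in> tile_strips X sw j' \<and> s \<in> tile_strips X sw j \<and> X ! s = Z)))"

definition is_RAT :: "letter list \<Rightarrow> nat list \<Rightarrow> (nat \<Rightarrow> cell) \<Rightarrow> bool" where
  "is_RAT X sw F \<longleftrightarrow> is_tiling X sw \<and>
     (\<forall>j<length sw. F j = Alpha \<longrightarrow> (\<exists>s\<in>tile_strips X sw j. X ! s = Z)) \<and>
     (\<forall>j<length sw. F j = Beta \<longrightarrow> (\<exists>s\<in>tile_strips X sw j. X ! s = H)) \<and>
     (\<forall>j<length sw. F j = Empty \<longleftrightarrow> forced_empty X sw F j)"

definition strip_with :: "letter list \<Rightarrow> nat list \<Rightarrow> nat \<Rightarrow> letter \<Rightarrow> nat" where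
  "strip_with X sw j c = (if X ! tp X sw j = c then tp X sw j else tq X sw j)"

definition other :: "letter list \<Rightarrow> nat list \<Rightarrow> nat \<Rightarrow> nat \<Rightarrow> nat" where
  "other X sw j s = (if s = tp X sw j then tq X sw j else tp X sw j)"

text \<open>Strip whose line is erased on the northwest side of a branching tile.\<close>
definition cutst :: "letter list \<Rightarrow> nat list \<Rightarrow> (nat \<Rightarrow> cell) \<Rightarrow> nat \<Rightarrow> nat" where
  "cutst X sw F j = (if F j = Alpha then strip_with X sw j Z else strip_with X sw j H)"

text \<open>Number of leaves below the edge of strip s on the stage-j path
  (0 if that part of the line is erased).\<close>
primrec lv :: "letter list \<Rightarrow> nat list \<Rightarrow> (nat \<Rightarrow> cell) \<Rightarrow> nat \<Rightarrow> nat \<Rightarrow> nat" where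
  "lv X sw F 0 = (\<lambda>s. 1)"
| "lv X sw F (Suc j) =
     (let f = lv X sw F j; c = cutst X sw F j; ot = other X sw j c in
      if F j = Alpha \<or> F j = Beta then f(ot := f ot + f c, c := 0) else f)"

text \<open>Roots in the prescribed order: red (top to bottom), the special green root
  (None), green (southwest to northeast), blue (left to right).  The final path is
  read from P to Q, i.e. west steps right to left, then southwest steps northeast
  to southwest, then south steps top to bottom.\<close>
definition roots :: "letter list \<Rightarrow> nat list \<Rightarrow> (nat \<Rightarrow> cell) \<Rightarrow> nat option list" where
  "roots X sw F =
     (let w = path X sw (length sw); f = lv X sw F (length sw);
          sel = (\<lambda>c. filter (\<lambda>s. X ! s = c \<and> f s > 0) w) in
      map Some (sel H) @ [None] @ map Some (rev (sel L)) @ map Some (rev (sel Z)))"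

definition root_size :: "letter list \<Rightarrow> nat list \<Rightarrow> (nat \<Rightarrow> cell) \<Rightarrow> nat option \<Rightarrow> nat" where
  "root_size X sw F x = (case x of None \<Rightarrow> 1 | Some s \<Rightarrow> lv X sw F (length sw) s)"

definition rootlab :: "letter list \<Rightarrow> nat list \<Rightarrow> (nat \<Rightarrow> cell) \<Rightarrow> nat \<Rightarrow> nat set" where
  "rootlab X sw F s =
     (let rs = roots X sw F; k = length (takeWhile (\<lambda>x. x \<noteq> Some s) rs);
          a = sum_list (map (root_size X sw F) (take k rs)) in
      if Some s \<in> set rs then {a<..a + root_size X sw F (Some s)} else {})"

text \<open>Split of B = C \<union> D with D \<succ> C and |C| = k: C consists of the k smallest elements.\<close>
definition lowpart :: "nat set \<Rightarrow> nat \<Rightarrow> nat set" where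
  "lowpart S k = {x \<in> S. x < Min S + k}"

text \<open>Receiver of the upper part D at a branching tile: rule (I) in a rhombus,
  rule (II) (eastward = along the west-strip) in an alpha square, rule (III)
  (southward = along the north-strip) in a beta square.\<close>
definition Drec :: "letter list \<Rightarrow> nat list \<Rightarrow> (nat \<Rightarrow> cell) \<Rightarrow> nat \<Rightarrow> nat" where
  "Drec X sw F j =
     (if L \<in> (\<lambda>s. X ! s) ` tile_strips X sw j then strip_with X sw j L
      else if F j = Alpha then strip_with X sw j H else strip_with X sw j Z)"

text \<open>labd d: labels on the edges of the path at stage (length sw - d),
  passing labels from the roots towards the southeast boundary.\<close>
primrec labd :: "letter list \<Rightarrow> nat list \<Rightarrow> (nat \<Rightarrow> cell) \<Rightarrow> nat \<Rightarrow> nat \<Rightarrow> nat set" where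
  "labd X sw F 0 = rootlab X sw F"
| "labd X sw F (Suc d) =
     (let j = length sw - Suc d; g = labd X sw F d; f = lv X sw F j in
      if F j = Alpha \<or> F j = Beta then
        (let Bl = g (other X sw j (cutst X sw F j)); dr = Drec X sw F j;
             cr = other X sw j dr; C = lowpart Bl (f cr) in
         g(cr := C, dr := Bl - C))
      else g)"

text \<open>lab j s: label carried by the edge of strip s on the stage-j path
  (stage 0 = southeast boundary).\<close>
definition lab :: "letter list \<Rightarrow> nat list \<Rightarrow> (nat \<Rightarrow> cell) \<Rightarrow> nat \<Rightarrow> nat \<Rightarrow> nat set" where
  "lab X sw F j = labd X sw F (length sw - j)"

end

theory Submission
  imports Defs
begin

(* Every label produced by the algorithm is a block of consecutive integers whose size is
   the number of leaves below the edge carrying it.  Walking down a north-strip, a tile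
   without alpha either passes the label on unchanged or is a beta-square, where rule (III)
   sends the upper part D southward, so the strip keeps the top of its block.  Hence the
   maximum of the block survives down to the boundary edge, whose block has size one. *)

lemma path_Suc:
  "j < length sw \<Longrightarrow> path X sw (Suc j) = swap_at (sw ! j) (path X sw j)"
  by (simp add: path_def take_Suc_conv_app_nth)

lemma length_fold_swap_at: "length (fold swap_at is w) = length w"
  by (induction "is" arbitrary: w) (simp_all add: swap_at_def)

lemma length_path: "length (path X sw j) = length X"
  by (simp add: path_def length_fold_swap_at)

lemma set_path:
  assumes "is_tiling X sw" "j \<le> length sw"
  shows "set (path X sw j) = {0..<length X}"
  using assms(2)
proof (induction j)
  case 0
  then show ?case by (simp add: path_def)
next
  case (Suc j)
  then have "j < length sw" by simp
  moreover have "Suc (sw ! j) < length X"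
    using assms(1) \<open>j < length sw\<close> unfolding is_tiling_def by blast
  ultimately show ?case
    using Suc by (simp add: path_Suc swap_at_def length_path)
qed

lemma tp_neq_tq: "is_tiling X sw \<Longrightarrow> j < length sw \<Longrightarrow> tp X sw j \<noteq> tq X sw j"
  unfolding is_tiling_def by fastforce

lemma tile_strips_less_length:
  assumes "is_tiling X sw" "j < length sw" "s \<in> tile_strips X sw j"
  shows "s < length X"
proof -
  have "Suc (sw ! j) < length (path X sw j)"
    using assms(1,2) unfolding is_tiling_def by (simp add: length_path)
  then have "tile_strips X sw j \<subseteq> set (path X sw j)"
    by (simp add: tile_strips_def tp_def tq_def)
  then show ?thesis
    using assms set_path[OF assms(1), of j] by auto
qed

lemma other_in_tile_strips: "other X sw j s \<in> tile_strips X sw j"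
  by (simp add: other_def tile_strips_def)

lemma cutst_in_tile_strips: "cutst X sw F j \<in> tile_strips X sw j"
  by (simp add: cutst_def strip_with_def tile_strips_def)

lemma Drec_in_tile_strips: "Drec X sw F j \<in> tile_strips X sw j"
  by (simp add: Drec_def strip_with_def tile_strips_def)

lemma tile_strips_other:
  assumes "tp X sw j \<noteq> tq X sw j" "s \<in> tile_strips X sw j"
  shows "tile_strips X sw j = {s, other X sw j s}" "other X sw j s \<noteq> s"
    "other X sw j (other X sw j s) = s"
  using assms by (auto simp: tile_strips_def other_def)

lemma lv_Suc_branching:
  assumes "F j = Alpha \<or> F j = Beta" "c = cutst X sw F j"
  shows "lv X sw F (Suc j) =
    (lv X sw F j)(other X sw j c := lv X sw F j (other X sw j c) + lv X sw F j c, c := 0)"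
  using assms by (simp add: Let_def)

lemma lv_Suc_notin:
  "s \<notin> tile_strips X sw j \<Longrightarrow> lv X sw F (Suc j) s = lv X sw F j s"
  using cutst_in_tile_strips[of X sw F j] other_in_tile_strips[of X sw j]
  by (auto simp: Let_def)

lemma lab_Suc_stage:
  assumes "j < length sw"
  shows "lab X sw F j = (if F j = Alpha \<or> F j = Beta then
     (let Bl = lab X sw F (Suc j) (other X sw j (cutst X sw F j)); dr = Drec X sw F j;
          cr = other X sw j dr; C = lowpart Bl (lv X sw F j cr) in
      (lab X sw F (Suc j))(cr := C, dr := Bl - C)) else lab X sw F (Suc j))"
proof -
  have "length sw - j = Suc (length sw - Suc j)" "length sw - Suc (length sw - Suc j) = j"
    using assms by simp_all
  then show ?thesis unfolding lab_def by (simp only: labd.simps Let_def)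
qed

lemma lab_Suc_notin:
  assumes "j < length sw" "s \<notin> tile_strips X sw j"
  shows "lab X sw F j s = lab X sw F (Suc j) s"
  using assms(2) Drec_in_tile_strips[of X sw F j] other_in_tile_strips[of X sw j]
  unfolding lab_Suc_stage[OF assms(1)] by (auto simp: Let_def)

lemma lowpart_greaterThanAtMost: "lowpart {a<..a + (m + k)} m = {a<..a + m}"
proof (cases "m + k = 0")
  case False
  then have "Min {a<..a + (m + k)} = Suc a"
    by (intro Min_eqI) auto
  then show ?thesis by (auto simp: lowpart_def)
qed (simp add: lowpart_def)

lemma greaterThanAtMost_diff_initial_segment:
  "{a<..a + (m + k)} - {a<..a + m} = {a + m<..a + m + k :: nat}"
  by auto

lemma rootlab_interval:
  assumes "is_tiling X sw" "s < length X"
  shows "\<exists>a. rootlab X sw F s = {a<..a + lv X sw F (length sw) s}"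
proof (cases "Some s \<in> set (roots X sw F)")
  case True
  then show ?thesis by (auto simp: rootlab_def Let_def root_size_def)
next
  case False
  have "s \<in> set (path X sw (length sw))"
    using set_path[OF assms(1)] assms(2) by simp
  with False have "lv X sw F (length sw) s = 0"
    by (cases "X ! s") (auto simp: roots_def Let_def)
  with False show ?thesis by (simp add: rootlab_def Let_def)
qed

text \<open>At a branching tile the incoming block covers the leaves of both outgoing lines, so its
  lower part and the rest are again blocks of the right sizes.\<close>

lemma lab_interval_Suc:
  assumes tiling: "is_tiling X sw" and j: "j < length sw" and s: "s < length X"
    and next_stage: "\<And>s. s < length X \<Longrightarrow>
      \<exists>a. lab X sw F (Suc j) s = {a<..a + lv X sw F (Suc j) s}"
  shows "\<exists>a. lab X sw F j s = {a<..a + lv X sw F j s}"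
proof (cases "F j = Alpha \<or> F j = Beta")
  case False
  then show ?thesis using next_stage[OF s] by (simp add: lab_Suc_stage[OF j] Let_def)
next
  case branching: True
  define f where "f = lv X sw F j"
  define c where "c = cutst X sw F j"
  define ot where "ot = other X sw j c"
  define dr where "dr = Drec X sw F j"
  define cr where "cr = other X sw j dr"
  have distinct: "tp X sw j \<noteq> tq X sw j" using tp_neq_tq[OF tiling j] .
  have c_ot: "tile_strips X sw j = {c, ot}" "ot \<noteq> c"
    using tile_strips_other[OF distinct cutst_in_tile_strips] unfolding c_def ot_def by auto
  have dr_cr: "tile_strips X sw j = {dr, cr}" "cr \<noteq> dr"
    using tile_strips_other[OF distinct Drec_in_tile_strips] unfolding dr_def cr_def by auto
  have sizes: "f ot + f c = f cr + f dr"
    using c_ot dr_cr by (metis add.commute doubleton_eq_iff)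
  have "ot < length X"
    using tile_strips_less_length[OF tiling j] c_ot(1) by blast
  then obtain a where a: "lab X sw F (Suc j) ot = {a<..a + (f cr + f dr)}"
    using next_stage lv_Suc_branching[OF branching c_def] c_ot(2) sizes
    unfolding f_def ot_def by fastforce
  have lab_j: "lab X sw F j =
      (lab X sw F (Suc j))(cr := {a<..a + f cr}, dr := {a + f cr<..a + f cr + f dr})"
    using branching a unfolding lab_Suc_stage[OF j]
    by (simp add: Let_def lowpart_greaterThanAtMost greaterThanAtMost_diff_initial_segment
        flip: c_def ot_def dr_def cr_def f_def)
  consider "s = cr" | "s = dr" | "s \<notin> tile_strips X sw j"
    using dr_cr(1) by blast
  then show ?thesis
  proof cases
    case 1
    then show ?thesis using lab_j unfolding f_def by auto
  next
    case 2
    then show ?thesis using lab_j dr_cr(2) by (intro exI[of _ "a + f cr"]) (simp add: f_def)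
  next
    case 3
    then show ?thesis using next_stage[OF s] lv_Suc_notin lab_Suc_notin[OF j] by metis
  qed
qed

lemma lab_interval:
  assumes "is_tiling X sw" "j \<le> length sw" "s < length X"
  shows "\<exists>a. lab X sw F j s = {a<..a + lv X sw F j s}"
  using assms(2,3)
proof (induction "length sw - j" arbitrary: j s)
  case 0
  then show ?case using rootlab_interval[OF assms(1)] by (simp add: lab_def)
next
  case (Suc d)
  then have j: "j < length sw" and "d = length sw - Suc j" by simp_all
  then have "\<And>s. s < length X \<Longrightarrow> \<exists>a. lab X sw F (Suc j) s = {a<..a + lv X sw F (Suc j) s}"
    using Suc.hyps(1) by (simp del: lv.simps)
  with Suc.prems(2) show ?case by (rule lab_interval_Suc[OF assms(1) j])
qed

lemma is_RAT_is_tiling: "is_RAT X sw F \<Longrightarrow> is_tiling X sw"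
  by (simp add: is_RAT_def)

lemma Beta_tile_on_north_strip:
  assumes rat: "is_RAT X sw F" and j: "j < length sw" and z: "z \<in> tile_strips X sw j" "X ! z = Z"
    and beta: "F j = Beta"
  shows "cutst X sw F j = other X sw j z" "Drec X sw F j = z"
proof -
  obtain h where h: "h \<in> tile_strips X sw j" "X ! h = H"
    using rat j beta unfolding is_RAT_def by blast
  have "tp X sw j \<noteq> tq X sw j"
    using tp_neq_tq[OF is_RAT_is_tiling[OF rat] j] .
  then have "tile_strips X sw j = {z, h}" "h = other X sw j z"
    using z h tile_strips_other[of X sw j z] by auto
  moreover have "z = tp X sw j \<or> z = tq X sw j"
    using z(1) by (simp add: tile_strips_def)
  ultimately show "cutst X sw F j = other X sw j z" "Drec X sw F j = z"
    using z(2) h(2) beta by (auto simp: cutst_def Drec_def strip_with_def other_def tile_strips_def)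
qed

text \<open>Rule (III) at a beta-square sends the upper part of the label south, so the north-strip
  keeps the top of its block.\<close>

lemma lab_north_strip_Suc:
  assumes rat: "is_RAT X sw F" and j: "j < length sw" and z: "X ! z = Z"
    and no_alpha: "z \<in> tile_strips X sw j \<Longrightarrow> F j \<noteq> Alpha"
    and top: "lab X sw F (Suc j) z = {b<..b + lv X sw F (Suc j) z}"
  shows "\<exists>d. lv X sw F (Suc j) z = d + lv X sw F j z \<and>
             lab X sw F j z = {b + d<..b + lv X sw F (Suc j) z}"
proof -
  consider (outside) "z \<notin> tile_strips X sw j"
    | (plain) "F j \<noteq> Alpha" "F j \<noteq> Beta"
    | (beta) "z \<in> tile_strips X sw j" "F j = Beta"
    using no_alpha by blast
  then show ?thesis
  proof cases
    case outside
    then have "lv X sw F (Suc j) z = lv X sw F j z" "lab X sw F j z = lab X sw F (Suc j) z"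
      by (rule lv_Suc_notin, rule lab_Suc_notin[OF j])
    then show ?thesis using top by (intro exI[of _ 0]) simp
  next
    case plain
    then show ?thesis using top by (simp add: lab_Suc_stage[OF j])
  next
    case beta
    define h where "h = other X sw j z"
    have distinct: "tp X sw j \<noteq> tq X sw j"
      using tp_neq_tq[OF is_RAT_is_tiling[OF rat] j] .
    note other_z = tile_strips_other[OF distinct beta(1), folded h_def]
    note beta_tile = Beta_tile_on_north_strip[OF rat j beta(1) z beta(2), folded h_def]
    have lv_z: "lv X sw F (Suc j) z = lv X sw F j h + lv X sw F j z"
      using lv_Suc_branching[OF _ beta_tile(1)[symmetric]] beta(2) other_z(2,3) by simp
    have "lab X sw F j z = lab X sw F (Suc j) z - lowpart (lab X sw F (Suc j) z) (lv X sw F j h)"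
      using beta(2) beta_tile other_z(2,3) by (simp add: lab_Suc_stage[OF j] Let_def flip: h_def)
    also have "\<dots> = {b + lv X sw F j h<..b + lv X sw F (Suc j) z}"
      unfolding top lv_z lowpart_greaterThanAtMost greaterThanAtMost_diff_initial_segment
      by (simp add: add.assoc)
    finally show ?thesis using lv_z by blast
  qed
qed

lemma lab_north_strip_descent:
  assumes rat: "is_RAT X sw F" and z: "X ! z = Z" and "i \<le> k" "k \<le> length sw"
    and "\<forall>j. i \<le> j \<longrightarrow> j < k \<longrightarrow> z \<in> tile_strips X sw j \<longrightarrow> F j \<noteq> Alpha"
    and "lab X sw F k z = {b<..b + lv X sw F k z}"
  shows "\<exists>d. lv X sw F k z = d + lv X sw F i z \<and>
             lab X sw F i z = {b + d<..b + lv X sw F k z}"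
  using assms(3-6)
proof (induction k arbitrary: b rule: dec_induct)
  case base
  then show ?case by auto
next
  case (step k)
  have "k < length sw" using step.prems(1) by simp
  moreover have "z \<in> tile_strips X sw k \<Longrightarrow> F k \<noteq> Alpha"
    using step.prems(2) step.hyps(1) by blast
  ultimately obtain d where d: "lv X sw F (Suc k) z = d + lv X sw F k z"
    "lab X sw F k z = {b + d<..b + lv X sw F (Suc k) z}"
    using lab_north_strip_Suc[OF rat _ z _ step.prems(3)] by blast
  then have "lab X sw F k z = {b + d<..(b + d) + lv X sw F k z}"
    by (simp del: lv.simps add: add.assoc)
  then obtain d' where "lv X sw F k z = d' + lv X sw F i z"
    "lab X sw F i z = {b + d + d'<..b + d + lv X sw F k z}"
    using step.IH step.prems(1,2) by (meson Suc_leD less_SucI)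
  with d show ?case by (intro exI[of _ "d + d'"]) (simp del: lv.simps add: add.assoc)
qed

theorem lemma3p8:
  fixes X :: "letter list" and sw :: "nat list" and F :: "nat \<Rightarrow> cell"
    and n r t z :: nat and J :: "nat set"
  assumes "X \<in> B n r"
    and "is_RAT X sw F"
    and "t < length sw"
    and "z \<in> tile_strips X sw t"
    and "X ! z = Z"
    and "J = lab X sw F t z"
    and "\<forall>t'<t. z \<in> tile_strips X sw t' \<longrightarrow> F t' \<noteq> Alpha"
  shows "lab X sw F 0 z = {Max J}"
proof -
  note tiling = is_RAT_is_tiling[OF assms(2)]
  have "z < length X" using tile_strips_less_length[OF tiling assms(3,4)] .
  then obtain b where J: "J = {b<..b + lv X sw F t z}"
    using lab_interval[OF tiling, of t z F] assms(3,6) by auto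
  then obtain d where "lv X sw F t z = Suc d" "lab X sw F 0 z = {b + d<..b + Suc d}"
    using lab_north_strip_descent[OF assms(2,5), of 0 t b] assms(3,6,7) by auto
  moreover from this J have "Max J = b + Suc d" by (auto intro: Max_eqI)
  ultimately show ?thesis by auto
qed

end
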